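(* Let $\nu$ be a norm on $\mathcal{M}_{n\times 1}$ and let $\|\cdot\|_\nu$ be the induced operator norm on $\mathcal{M}_{n\times n}$, $\|A\|_\nu=\max\{\nu(Ax):\nu(x)\le 1\}$. Let $\mathscr{E}$ and $\mathscr{E}^D$ be the sets of extreme points of the unit balls of $\nu$ and of its dual norm $\nu^D$, respectively. For $A\in\mathcal{M}_{n\times n}$ let $$V(A)=\{xy^*: x\in\mathscr{E}^D,\ y\in\mathscr{E},\ \langle A,xy^*\rangle=\|A\|_\nu\}.$$ Let $A,B\in\mathcal{M}_{n\times n}$. Then $A\parallel B$ in $\|\cdot\|_\nu$ if and only if there exist $k$ elements $x_1y_1^*,\dots,x_ky_k^*\in V(A)$, with $k\le 3$ in the complex case and $k\le 2$ in the real case, and positive numbers $t_1,\dots,t_k$ with $t_1+\cdots+t_k=1$, such that $$\Big|\sum_{j=1}^k t_j\langle B,x_jy_j^*\rangle\Big|=\|B\|_\nu.$$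
   Context: $\mathcal{M}_{m\times n}$ denotes complex (or, in the real case, real) $m\times n$ matrices, with inner product $\langle A,B\rangle=\mathrm{tr}(AB^* )$ (for column vectors $\langle x,y\rangle = y^*x$). The dual norm is $\nu^D(x)=\max\{|\langle x,y\rangle|:\nu(y)\le 1\}$. $A\parallel B$ in a norm $\|\cdot\|$ means $\|A+\lambda B\|=\|A\|+\|B\|$ for some scalar $\lambda$ with $|\lambda|=1$. *)

theory Defs
  imports "HOL-Analysis.Analysis"
begin

text \<open>The conjugation map cj is a parameter:
  cj = cnj for complex scalars and cj = id for real scalars.
  Column vectors in M_{n x 1} are 'a^'n, matrices in M_{n x n} are 'a^'n^'n.\<close>

definition is_norm_on :: "('a::real_normed_field ^ 'n \<Rightarrow> real) \<Rightarrow> bool" where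
  "is_norm_on \<nu> \<longleftrightarrow>
     (\<forall>x. 0 \<le> \<nu> x) \<and> (\<forall>x. \<nu> x = 0 \<longleftrightarrow> x = 0) \<and>
     (\<forall>c x. \<nu> (c *s x) = norm c * \<nu> x) \<and>
     (\<forall>x y. \<nu> (x + y) \<le> \<nu> x + \<nu> y)"

definition vinner :: "('a \<Rightarrow> 'a) \<Rightarrow> 'a::real_normed_field ^ 'n \<Rightarrow> 'a ^ 'n \<Rightarrow> 'a" where
  "vinner cj x y = (\<Sum>i\<in>UNIV. x $ i * cj (y $ i))"

definition minner :: "('a \<Rightarrow> 'a) \<Rightarrow> 'a::real_normed_field ^ 'n ^ 'n \<Rightarrow> 'a ^ 'n ^ 'n \<Rightarrow> 'a" where
  "minner cj A B = (\<Sum>i\<in>UNIV. \<Sum>j\<in>UNIV. A $ i $ j * cj (B $ i $ j))"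

definition outer :: "('a \<Rightarrow> 'a) \<Rightarrow> 'a::real_normed_field ^ 'n \<Rightarrow> 'a ^ 'n \<Rightarrow> 'a ^ 'n ^ 'n" where
  "outer cj x y = (\<chi> i j. x $ i * cj (y $ j))"

definition dual_norm :: "('a \<Rightarrow> 'a) \<Rightarrow> ('a::real_normed_field ^ 'n \<Rightarrow> real) \<Rightarrow> 'a ^ 'n \<Rightarrow> real" where
  "dual_norm cj \<nu> x = Sup {norm (vinner cj x y) | y. \<nu> y \<le> 1}"

definition op_norm :: "('a::real_normed_field ^ 'n \<Rightarrow> real) \<Rightarrow> 'a ^ 'n ^ 'n \<Rightarrow> real" where
  "op_norm \<nu> A = Sup {\<nu> (A *v x) | x. \<nu> x \<le> 1}"

definition ext_ball :: "('a::real_normed_field ^ 'n \<Rightarrow> real) \<Rightarrow> ('a ^ 'n) set" where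
  "ext_ball \<nu> = {x. x extreme_point_of {y. \<nu> y \<le> 1}}"

definition V_set :: "('a \<Rightarrow> 'a) \<Rightarrow> ('a::real_normed_field ^ 'n \<Rightarrow> real) \<Rightarrow> 'a ^ 'n ^ 'n \<Rightarrow> ('a ^ 'n ^ 'n) set" where
  "V_set cj \<nu> A = {outer cj x y | x y. x \<in> ext_ball (dual_norm cj \<nu>) \<and> y \<in> ext_ball \<nu> \<and>
                      minner cj A (outer cj x y) = of_real (op_norm \<nu> A)}"

definition norm_parallel :: "('a::real_normed_field ^ 'n \<Rightarrow> real) \<Rightarrow> 'a ^ 'n ^ 'n \<Rightarrow> 'a ^ 'n ^ 'n \<Rightarrow> bool" where
  "norm_parallel \<nu> A B \<longleftrightarrow>
     (\<exists>c::'a. norm c = 1 \<and> op_norm \<nu> (A + (\<chi> i j. c * B $ i $ j)) = op_norm \<nu> A + op_norm \<nu> B)"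

end

theory Submission
  imports Defs
begin

(*
  Both directions rest on V(C) being nonempty for every matrix C. The operator norm ||C|| is the
  maximum of the real bilinear form Re <C, x y^*> = Re <C y, x> over the product of the unit balls
  of nu^D and nu (the dual vector norming C y is obtained by separating C y / ||C|| from the open
  unit ball of nu). Maximising this linear form first in y and then in x over compact convex balls,
  the maximum is attained at extreme points, and equality in Re w <= |w| makes <C, x y^*> real.

  If ||A + c B|| = ||A|| + ||B|| with |c| = 1, an element of V(A + c B) attains both bounds
  |<A, x y^*>| <= ||A|| and |<B, x y^*>| <= ||B||, so it lies in V(A): a single element (k = 1)
  suffices. Conversely, rotating B by a unimodular c with c * sum t_j <B, M_j> = ||B||, the convex
  combination gives ||A + c B|| >= |sum t_j <A + c B, M_j>| = ||A|| + ||B||.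
*)

abbreviation unit_ball :: "('b \<Rightarrow> real) \<Rightarrow> 'b set" where
  "unit_ball N \<equiv> {y. N y \<le> 1}"

lemma convex_on_imp_convex_sublevel:
  assumes "convex_on UNIV f"
  shows "convex {x. f x \<le> r}"
proof (rule convexI)
  fix x y :: 'a and u v :: real
  assume "x \<in> {x. f x \<le> r}" "y \<in> {x. f x \<le> r}" and uv: "0 \<le> u" "0 \<le> v" "u + v = 1"
  then have "u * f x + v * f y \<le> u * r + v * r"
    by (intro add_mono mult_left_mono) auto
  moreover have "f (u *\<^sub>R x + v *\<^sub>R y) \<le> u * f x + v * f y"
    using assms uv by (simp add: convex_on_def)
  ultimately show "u *\<^sub>R x + v *\<^sub>R y \<in> {x. f x \<le> r}"
    using uv by (simp add: distrib_right[symmetric])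
qed

lemma convex_on_imp_convex_strict_sublevel:
  assumes "convex_on UNIV f"
  shows "convex {x. f x < r}"
proof (rule convexI)
  fix x y :: 'a and u v :: real
  assume xy: "x \<in> {x. f x < r}" "y \<in> {x. f x < r}" and uv: "0 \<le> u" "0 \<le> v" "u + v = 1"
  have "u * f x + v * f y < u * r + v * r"
  proof (cases "u = 0")
    case True
    then show ?thesis using xy uv by simp
  next
    case False
    then show ?thesis
      using xy uv by (intro add_less_le_mono mult_strict_left_mono mult_left_mono) auto
  qed
  moreover have "f (u *\<^sub>R x + v *\<^sub>R y) \<le> u * f x + v * f y"
    using assms uv by (simp add: convex_on_def)
  ultimately show "u *\<^sub>R x + v *\<^sub>R y \<in> {x. f x < r}"
    using uv by (simp add: distrib_right[symmetric])
qed

lemma linear_max_at_extreme_point: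
  fixes f :: "'b::euclidean_space \<Rightarrow> real"
  assumes "compact S" "convex S" "linear f" "x \<in> S" "\<And>y. y \<in> S \<Longrightarrow> f y \<le> f x"
  shows "\<exists>e. e extreme_point_of S \<and> f e = f x"
proof -
  define a where "a = adjoint f 1"
  have f_eq: "f y = a \<bullet> y" for y
    using adjoint_works[OF \<open>linear f\<close>, of y 1] by (simp add: a_def inner_commute)
  define T where "T = S \<inter> {y. a \<bullet> y = f x}"
  have "T face_of S"
    unfolding T_def using assms(2,5) by (intro face_of_Int_supporting_hyperplane_le) (auto simp: f_eq)
  moreover have "compact T"
    unfolding T_def using assms(1) by (simp add: closed_hyperplane compact_Int_closed)
  moreover have "T \<noteq> {}"
    using assms(4) by (auto simp: T_def f_eq)
  ultimately obtain e where "e extreme_point_of T" "T face_of S"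
    using extreme_point_exists_convex face_of_imp_convex by blast
  then show ?thesis
    using extreme_point_of_face by (fastforce simp: T_def f_eq)
qed

lemma inner_one_le_norm: "(a::'a::{real_inner,real_normed_algebra_1}) \<bullet> 1 \<le> norm a"
  using norm_cauchy_schwarz[of a 1] by simp

lemma of_real_inner_one [simp]: "(of_real r :: 'a::{real_inner,real_normed_algebra_1}) \<bullet> 1 = r"
  by (simp add: of_real_def dot_square_norm)

lemma eq_of_real_norm_if_norm_le_inner_one:
  fixes a :: "'a::{real_inner,real_normed_algebra_1}"
  assumes "norm a \<le> a \<bullet> 1"
  shows "a = of_real (norm a)"
proof -
  have "a \<bullet> 1 = norm a * norm (1::'a)"
    using assms inner_one_le_norm[of a] by simp
  then have "norm a *\<^sub>R 1 = a"
    using norm_cauchy_schwarz_eq[of a 1] by simp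
  then show ?thesis
    by (simp add: of_real_def)
qed

lemma add_eq_of_real_imp_summands_of_real:
  fixes x y :: "'a::{real_inner,real_normed_algebra_1}"
  assumes sum: "x + y = of_real (\<alpha> + \<beta>)" and "norm x \<le> \<alpha>" "norm y \<le> \<beta>"
  shows "x = of_real \<alpha>" "y = of_real \<beta>"
proof -
  have "x \<bullet> 1 + y \<bullet> 1 = \<alpha> + \<beta>"
    using arg_cong[OF sum, of "\<lambda>z. z \<bullet> 1"] by (simp add: inner_add_left)
  then have "norm x \<le> x \<bullet> 1" "norm x = \<alpha>" "norm y \<le> y \<bullet> 1" "norm y = \<beta>"
    using assms(2,3) inner_one_le_norm[of x] inner_one_le_norm[of y] by linarith+
  then show "x = of_real \<alpha>" "y = of_real \<beta>"
    using eq_of_real_norm_if_norm_le_inner_one by metis+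
qed

lemma exists_unit_mult_eq_norm:
  fixes v :: "'a::real_normed_field"
  obtains u where "norm u = 1" "u * v = of_real (norm v)"
proof (cases "v = 0")
  case False
  then show ?thesis
    using that[of "of_real (norm v) / v"] by (simp add: norm_divide)
qed (use that[of 1] in simp)

lemma matrix_vector_mult_add_scaled:
  "(A + (\<chi> i j. c * B $ i $ j)) *v x = A *v x + c *s (B *v x)"
  by (simp add: vec_eq_iff matrix_vector_mult_def sum.distrib sum_distrib_left algebra_simps)

lemma minner_add_scaled:
  "minner cj (A + (\<chi> i j. c * B $ i $ j)) M = minner cj A M + c * minner cj B M"
  by (simp add: minner_def sum.distrib sum_distrib_left algebra_simps)

lemma mem_V_set_iff:
  "M \<in> V_set cj \<nu> C \<longleftrightarrow>
     (\<exists>x y. x \<in> ext_ball (dual_norm cj \<nu>) \<and> y \<in> ext_ball \<nu> \<and> M = outer cj x y) \<and>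
     minner cj C M = of_real (op_norm \<nu> C)"
  unfolding V_set_def by blast

locale vector_norm =
  fixes \<nu> :: "'a::{real_normed_field,euclidean_space} ^ 'n \<Rightarrow> real"
  assumes is_norm: "is_norm_on \<nu>"
begin

lemma nu_nonneg: "0 \<le> \<nu> x"
  using is_norm by (simp add: is_norm_on_def)

lemma nu_eq_0_iff [simp]: "\<nu> x = 0 \<longleftrightarrow> x = 0"
  using is_norm by (simp add: is_norm_on_def)

lemma nu_scale: "\<nu> (c *s x) = norm c * \<nu> x"
  using is_norm by (simp add: is_norm_on_def)

lemma nu_triangle: "\<nu> (x + y) \<le> \<nu> x + \<nu> y"
  using is_norm by (simp add: is_norm_on_def)

lemma nu_0 [simp]: "\<nu> 0 = 0"
  by simp

lemma nu_pos: "x \<noteq> 0 \<Longrightarrow> 0 < \<nu> x"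
  using nu_nonneg[of x] by (simp add: order_less_le)

lemma nu_scaleR: "\<nu> (r *\<^sub>R x) = \<bar>r\<bar> * \<nu> x"
proof -
  have "r *\<^sub>R x = (of_real r :: 'a) *s x"
    by (simp add: vec_eq_iff scaleR_conv_of_real[where 'a='a])
  then show ?thesis
    by (simp add: nu_scale)
qed

lemma convex_on_nu: "convex_on UNIV \<nu>"
proof (rule convex_onI)
  fix t :: real and x y
  assume "0 < t" "t < 1"
  then show "\<nu> ((1 - t) *\<^sub>R x + t *\<^sub>R y) \<le> (1 - t) * \<nu> x + t * \<nu> y"
    using nu_triangle[of "(1 - t) *\<^sub>R x" "t *\<^sub>R y"] by (simp add: nu_scaleR)
qed simp

lemma continuous_on_nu: "continuous_on S \<nu>"
  using convex_on_continuous[OF open_UNIV convex_on_nu] continuous_on_subset by blast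

lemma nu_eq_norm_mult_sgn: "\<nu> x = norm x * \<nu> (sgn x)"
  by (cases "x = 0") (simp_all add: sgn_div_norm nu_scaleR)

lemma ex_norm_le_nu: "\<exists>c>0. \<forall>x. c * norm x \<le> \<nu> x"
proof -
  obtain m where m: "m \<in> sphere 0 1" "\<And>y. y \<in> sphere 0 1 \<Longrightarrow> \<nu> m \<le> \<nu> y"
    using continuous_attains_inf[OF compact_sphere _ continuous_on_nu, of "0::'a^'n" 1] by auto
  have "\<nu> m * norm x \<le> \<nu> x" for x
    using m(2)[of "sgn x"] nu_eq_norm_mult_sgn[of x]
    by (cases "x = 0") (simp_all add: norm_sgn mult.commute)
  moreover have "0 < \<nu> m"
    using m(1) by (intro nu_pos) auto
  ultimately show ?thesis
    by blast
qed

lemma ex_nu_le_norm: "\<exists>K>0. \<forall>x. \<nu> x \<le> K * norm x"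
proof -
  obtain m where m: "m \<in> sphere 0 1" "\<And>y. y \<in> sphere 0 1 \<Longrightarrow> \<nu> y \<le> \<nu> m"
    using continuous_attains_sup[OF compact_sphere _ continuous_on_nu, of "0::'a^'n" 1] by auto
  have "\<nu> x \<le> \<nu> m * norm x" for x
    using m(2)[of "sgn x"] nu_eq_norm_mult_sgn[of x]
    by (cases "x = 0") (simp_all add: norm_sgn mult.commute nu_nonneg)
  moreover have "0 < \<nu> m"
    using m(1) by (intro nu_pos) auto
  ultimately show ?thesis
    by blast
qed

lemma bounded_unit_ball: "bounded (unit_ball \<nu>)"
proof -
  obtain c where c: "c > 0" "\<And>x. c * norm x \<le> \<nu> x"
    using ex_norm_le_nu by blast
  have "norm x \<le> 1 / c" if "\<nu> x \<le> 1" for x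
    using c(2)[of x] that \<open>c > 0\<close> by (simp add: field_simps)
  then show ?thesis
    unfolding bounded_iff by blast
qed

lemma compact_unit_ball: "compact (unit_ball \<nu>)"
proof -
  have "closed (unit_ball \<nu>)"
    by (intro closed_Collect_le continuous_on_nu continuous_on_const)
  with bounded_unit_ball show ?thesis
    by (simp add: compact_eq_bounded_closed)
qed

lemma convex_unit_ball: "convex (unit_ball \<nu>)"
  by (rule convex_on_imp_convex_sublevel[OF convex_on_nu])

lemma op_norm_attained:
  fixes C :: "'a ^ 'n ^ 'n"
  obtains y where "\<nu> y \<le> 1" "op_norm \<nu> C = \<nu> (C *v y)"
    "\<And>y'. \<nu> y' \<le> 1 \<Longrightarrow> \<nu> (C *v y') \<le> op_norm \<nu> C"
proof -
  have "continuous_on (unit_ball \<nu>) (\<nu> \<circ> (*v) C)"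
    by (intro continuous_on_compose continuous_intros continuous_on_nu)
  moreover have "0 \<in> unit_ball \<nu>"
    by simp
  ultimately have "\<exists>y\<in>unit_ball \<nu>. \<forall>y'\<in>unit_ball \<nu>. \<nu> (C *v y') \<le> \<nu> (C *v y)"
    using continuous_attains_sup[OF compact_unit_ball, of "\<nu> \<circ> (*v) C"] by fastforce
  then obtain y where y: "\<nu> y \<le> 1" "\<And>y'. \<nu> y' \<le> 1 \<Longrightarrow> \<nu> (C *v y') \<le> \<nu> (C *v y)"
    by auto
  then have "op_norm \<nu> C = \<nu> (C *v y)"
    unfolding op_norm_def by (intro cSup_eq_maximum) auto
  with y that show ?thesis by simp
qed

lemma nu_matrix_vector_mult_le_op_norm: "\<nu> y \<le> 1 \<Longrightarrow> \<nu> (C *v y) \<le> op_norm \<nu> C"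
  by (metis op_norm_attained)

lemma op_norm_nonneg: "0 \<le> op_norm \<nu> C"
  by (metis op_norm_attained nu_nonneg)

lemma op_norm_add_scaled_le:
  "op_norm \<nu> (A + (\<chi> i j. c * B $ i $ j)) \<le> op_norm \<nu> A + norm c * op_norm \<nu> B"
proof -
  obtain y where y: "\<nu> y \<le> 1"
    and attained: "op_norm \<nu> (A + (\<chi> i j. c * B $ i $ j)) = \<nu> ((A + (\<chi> i j. c * B $ i $ j)) *v y)"
    using op_norm_attained by blast
  note attained
  also have "\<dots> \<le> \<nu> (A *v y) + norm c * \<nu> (B *v y)"
    using nu_triangle[of "A *v y" "c *s (B *v y)"] by (simp add: matrix_vector_mult_add_scaled nu_scale)
  also have "\<dots> \<le> op_norm \<nu> A + norm c * op_norm \<nu> B"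
    using y(1) by (intro add_mono mult_left_mono nu_matrix_vector_mult_le_op_norm) auto
  finally show ?thesis .
qed

lemma exists_supporting_functional:
  assumes z: "\<nu> z = 1"
  obtains a where "a \<noteq> 0" "\<And>y. \<nu> y \<le> 1 \<Longrightarrow> a \<bullet> y \<le> a \<bullet> z"
proof -
  have "convex {y. \<nu> y < 1}"
    by (rule convex_on_imp_convex_strict_sublevel[OF convex_on_nu])
  moreover have "0 \<in> {y. \<nu> y < 1}"
    by simp
  moreover have "{y. \<nu> y < 1} \<inter> {z} = {}"
    using z by auto
  ultimately obtain a b where a: "a \<noteq> 0" "\<And>y. \<nu> y < 1 \<Longrightarrow> a \<bullet> y \<le> b" "b \<le> a \<bullet> z"
    using separating_hyperplane_sets[of "{y. \<nu> y < 1}" "{z}"] by auto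
  have "a \<bullet> y \<le> a \<bullet> z" if "\<nu> y \<le> 1" for y
  proof (rule field_le_mult_one_interval)
    fix r :: real
    assume "0 < r" "r < 1"
    moreover have "r * \<nu> y \<le> r * 1"
      using that \<open>0 < r\<close> by (intro mult_left_mono) auto
    ultimately have "\<nu> (r *\<^sub>R y) < 1"
      by (simp only: nu_scaleR abs_of_pos)
    then show "r * (a \<bullet> y) \<le> a \<bullet> z"
      using a(2)[of "r *\<^sub>R y"] a(3) by simp
  qed
  with a(1) that show ?thesis
    by blast
qed

end

(* cj is cnj on complex and id on real scalars; the real part of a is a \<bullet> 1. *)
locale conj_field =
  fixes cj :: "'a::{real_normed_field,euclidean_space} \<Rightarrow> 'a"
  assumes cj_add: "cj (a + b) = cj a + cj b"
    and cj_mult: "cj (a * b) = cj a * cj b"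
    and cj_cj [simp]: "cj (cj a) = a"
    and norm_cj [simp]: "norm (cj a) = norm a"
    and cj_of_real [simp]: "cj (of_real r) = of_real r"
    and inner_eq_mult_cj: "a \<bullet> b = (a * cj b) \<bullet> 1"
begin

lemma cj_0 [simp]: "cj 0 = 0"
  using cj_of_real[of 0] by simp

lemma cj_sum: "cj (sum f I) = (\<Sum>i\<in>I. cj (f i))"
  by (induction I rule: infinite_finite_induct) (simp_all add: cj_add)

lemma vinner_eq_cj_vinner: "vinner cj x y = cj (vinner cj y x)"
  by (simp add: vinner_def cj_sum cj_mult mult.commute)

lemma norm_vinner_commute: "norm (vinner cj x y) = norm (vinner cj y x)"
  by (subst vinner_eq_cj_vinner) simp

lemma vinner_inner_one: "vinner cj x y \<bullet> 1 = x \<bullet> y"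
  by (simp add: vinner_def inner_vec_def inner_sum_left flip: inner_eq_mult_cj)

lemma vinner_scale_left: "vinner cj (c *s x) y = c * vinner cj x y"
  by (simp add: vinner_def sum_distrib_left mult_ac)

lemma vinner_scaleR_left: "vinner cj (r *\<^sub>R x) y = of_real r * vinner cj x y"
  by (simp add: vinner_def sum_distrib_left scaleR_conv_of_real[where 'a='a] mult_ac)

lemma vinner_scaleR_right: "vinner cj x (r *\<^sub>R y) = of_real r * vinner cj x y"
  by (simp add: vinner_def sum_distrib_left scaleR_conv_of_real[where 'a='a] cj_mult mult_ac)

lemma vinner_add_left: "vinner cj (x + x') y = vinner cj x y + vinner cj x' y"
  by (simp add: vinner_def sum.distrib distrib_right)

lemma norm_vinner_le: "norm (vinner cj x y) \<le> (\<Sum>i\<in>UNIV. norm (x $ i)) * norm y"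
proof -
  have "norm (vinner cj x y) \<le> (\<Sum>i\<in>UNIV. norm (x $ i) * norm (y $ i))"
    unfolding vinner_def by (rule order_trans[OF norm_sum]) (simp add: norm_mult)
  also have "\<dots> \<le> (\<Sum>i\<in>UNIV. norm (x $ i) * norm y)"
    by (intro sum_mono mult_left_mono) (simp_all add: Finite_Cartesian_Product.norm_nth_le)
  finally show ?thesis
    by (simp add: sum_distrib_right)
qed

lemma norm_sq_le_norm_vinner_self: "norm x ^ 2 \<le> norm (vinner cj x x)"
  using inner_one_le_norm[of "vinner cj x x"] by (simp add: vinner_inner_one power2_norm_eq_inner)

lemma minner_outer: "minner cj C (outer cj x y) = vinner cj (C *v y) x"
  by (simp add: minner_def outer_def vinner_def matrix_vector_mult_def cj_mult
      sum_distrib_right sum_distrib_left mult_ac)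

lemma minner_outer_inner_one: "minner cj C (outer cj x y) \<bullet> 1 = (C *v y) \<bullet> x"
  by (simp add: minner_outer vinner_inner_one)

end

locale conj_vector_norm = conj_field cj + vector_norm \<nu>
  for cj :: "'a::{real_normed_field,euclidean_space} \<Rightarrow> 'a" and \<nu> :: "'a ^ 'n \<Rightarrow> real"
begin

lemma bdd_above_norm_vinner: "bdd_above {norm (vinner cj x y) | y. \<nu> y \<le> 1}"
proof -
  obtain R where R: "\<And>y. \<nu> y \<le> 1 \<Longrightarrow> norm y \<le> R"
    using bounded_unit_ball unfolding bounded_iff by auto
  have "norm (vinner cj x y) \<le> (\<Sum>i\<in>UNIV. norm (x $ i)) * R" if "\<nu> y \<le> 1" for y
    using R[OF that] by (rule order_trans[OF norm_vinner_le mult_left_mono]) (simp add: sum_nonneg)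
  then show ?thesis
    unfolding bdd_above_def by blast
qed

lemma dual_norm_le_iff: "dual_norm cj \<nu> x \<le> r \<longleftrightarrow> (\<forall>y. \<nu> y \<le> 1 \<longrightarrow> norm (vinner cj x y) \<le> r)"
proof -
  have "norm (vinner cj x 0) \<in> {norm (vinner cj x y) | y. \<nu> y \<le> 1}"
    by auto
  then have "{norm (vinner cj x y) | y. \<nu> y \<le> 1} \<noteq> {}"
    by blast
  then show ?thesis
    unfolding dual_norm_def by (subst cSup_le_iff[OF _ bdd_above_norm_vinner]) blast+
qed

lemma norm_vinner_le_dual_norm: "norm (vinner cj x z) \<le> dual_norm cj \<nu> x * \<nu> z"
proof (cases "z = 0")
  case False
  then have "0 < \<nu> z"
    by (rule nu_pos)
  have "\<nu> ((1 / \<nu> z) *\<^sub>R z) \<le> 1"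
    using \<open>0 < \<nu> z\<close> by (simp add: nu_scaleR)
  then have "norm (vinner cj x ((1 / \<nu> z) *\<^sub>R z)) \<le> dual_norm cj \<nu> x"
    using dual_norm_le_iff by blast
  then show ?thesis
    using \<open>0 < \<nu> z\<close> by (simp add: vinner_scaleR_right norm_divide field_simps)
qed (simp add: vinner_def)

lemma compact_dual_unit_ball: "compact (unit_ball (dual_norm cj \<nu>))"
proof -
  obtain K where K: "K > 0" "\<And>x. \<nu> x \<le> K * norm x"
    using ex_nu_le_norm by blast
  have "norm x \<le> K" if "dual_norm cj \<nu> x \<le> 1" for x
  proof -
    have "norm x ^ 2 \<le> norm (vinner cj x x)"
      by (rule norm_sq_le_norm_vinner_self)
    also have "\<dots> \<le> \<nu> x"
      using norm_vinner_le_dual_norm[of x x] mult_right_mono[OF that nu_nonneg[of x]] by simp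
    also have "\<dots> \<le> K * norm x"
      by (rule K(2))
    finally show ?thesis
      by (cases "x = 0") (use K in \<open>auto simp: power2_eq_square\<close>)
  qed
  then have "bounded (unit_ball (dual_norm cj \<nu>))"
    by (auto simp: bounded_iff)
  moreover have "unit_ball (dual_norm cj \<nu>) = (\<Inter>y\<in>unit_ball \<nu>. {x. norm (vinner cj x y) \<le> 1})"
    using dual_norm_le_iff by auto
  then have "closed (unit_ball (dual_norm cj \<nu>))"
    by (auto simp: vinner_def intro!: closed_INT closed_Collect_le continuous_intros)
  ultimately show ?thesis
    by (simp add: compact_eq_bounded_closed)
qed

lemma convex_dual_unit_ball: "convex (unit_ball (dual_norm cj \<nu>))"
proof (rule convexI)
  fix x x' :: "'a ^ 'n" and u v :: real
  assume "x \<in> unit_ball (dual_norm cj \<nu>)" "x' \<in> unit_ball (dual_norm cj \<nu>)"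
    and uv: "0 \<le> u" "0 \<le> v" "u + v = 1"
  then have bounds: "norm (vinner cj x y) \<le> 1" "norm (vinner cj x' y) \<le> 1" if "\<nu> y \<le> 1" for y
    using that dual_norm_le_iff by auto
  have "norm (vinner cj (u *\<^sub>R x + v *\<^sub>R x') y) \<le> 1" if "\<nu> y \<le> 1" for y
  proof -
    have "norm (vinner cj (u *\<^sub>R x + v *\<^sub>R x') y) \<le> u * norm (vinner cj x y) + v * norm (vinner cj x' y)"
      unfolding vinner_add_left vinner_scaleR_left
      using uv norm_triangle_ineq[of "of_real u * vinner cj x y" "of_real v * vinner cj x' y"]
      by (simp add: norm_mult)
    also have "\<dots> \<le> u * 1 + v * 1"
      using bounds[OF that] uv by (intro add_mono mult_left_mono) auto
    finally show ?thesis
      using uv by simp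
  qed
  then show "u *\<^sub>R x + v *\<^sub>R x' \<in> unit_ball (dual_norm cj \<nu>)"
    using dual_norm_le_iff by auto
qed

lemma dual_norm_le_if_inner_le:
  assumes "\<And>y. \<nu> y \<le> 1 \<Longrightarrow> x \<bullet> y \<le> r"
  shows "dual_norm cj \<nu> x \<le> r"
  unfolding dual_norm_le_iff
proof (intro allI impI)
  \<comment> \<open>a unimodular rotation of y turns the modulus of vinner into a real part\<close>
  fix y
  assume "\<nu> y \<le> 1"
  obtain u where u: "norm u = 1" "u * vinner cj y x = of_real (norm (vinner cj y x))"
    using exists_unit_mult_eq_norm .
  have "norm (vinner cj x y) = vinner cj (u *s y) x \<bullet> 1"
    using u by (simp add: norm_vinner_commute[of x] vinner_scale_left)
  also have "\<dots> = x \<bullet> (u *s y)"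
    by (metis vinner_inner_one inner_commute)
  also have "\<dots> \<le> r"
    using \<open>\<nu> y \<le> 1\<close> u(1) by (intro assms) (simp add: nu_scale)
  finally show "norm (vinner cj x y) \<le> r" .
qed

lemma exists_norming_dual_vector_of_unit:
  assumes z: "\<nu> z = 1"
  obtains x where "dual_norm cj \<nu> x \<le> 1" "vinner cj z x = 1"
proof -
  obtain a where a: "a \<noteq> 0" "\<And>y. \<nu> y \<le> 1 \<Longrightarrow> a \<bullet> y \<le> a \<bullet> z"
    using exists_supporting_functional[OF z] by blast
  define s where "s = a \<bullet> z"
  have "dual_norm cj \<nu> a \<le> s"
    using a(2) unfolding s_def by (rule dual_norm_le_if_inner_le)
  have "0 < s"
  proof -
    have "0 < norm a ^ 2"
      using a(1) by simp
    also have "\<dots> \<le> dual_norm cj \<nu> a * \<nu> a"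
      using norm_sq_le_norm_vinner_self norm_vinner_le_dual_norm by (rule order_trans)
    also have "\<dots> \<le> s * \<nu> a"
      using \<open>dual_norm cj \<nu> a \<le> s\<close> nu_nonneg by (rule mult_right_mono)
    finally show ?thesis
      using nu_nonneg[of a] by (simp add: zero_less_mult_iff)
  qed
  define x where "x = (1 / s) *\<^sub>R a"
  have "dual_norm cj \<nu> x \<le> 1"
    using a(2) \<open>0 < s\<close> by (intro dual_norm_le_if_inner_le) (simp add: x_def s_def)
  moreover have "vinner cj z x = 1"
  proof -
    have "norm (vinner cj z x) \<le> 1"
      using norm_vinner_commute[of z x] norm_vinner_le_dual_norm[of x z] \<open>dual_norm cj \<nu> x \<le> 1\<close> z
      by simp
    moreover have "vinner cj z x \<bullet> 1 = 1"
      using \<open>0 < s\<close> unfolding vinner_inner_one by (simp add: x_def s_def inner_commute)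
    ultimately show ?thesis
      using eq_of_real_norm_if_norm_le_inner_one[of "vinner cj z x"] inner_one_le_norm[of "vinner cj z x"]
      by simp
  qed
  ultimately show ?thesis
    using that by blast
qed

lemma exists_norming_dual_vector:
  obtains x where "dual_norm cj \<nu> x \<le> 1" "vinner cj z x = of_real (\<nu> z)"
proof (cases "z = 0")
  case True
  have "dual_norm cj \<nu> 0 \<le> 1"
    by (simp add: dual_norm_le_iff vinner_def)
  with True that show ?thesis
    by (simp add: vinner_def)
next
  case False
  then have "0 < \<nu> z"
    by (rule nu_pos)
  then have "\<nu> ((1 / \<nu> z) *\<^sub>R z) = 1"
    using False by (simp add: nu_scaleR)
  then obtain x where x: "dual_norm cj \<nu> x \<le> 1" "vinner cj ((1 / \<nu> z) *\<^sub>R z) x = 1"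
    by (rule exists_norming_dual_vector_of_unit)
  then have "vinner cj z x = of_real (\<nu> z)"
    using \<open>0 < \<nu> z\<close> by (simp add: vinner_scaleR_left field_simps)
  with x that show ?thesis
    by blast
qed

lemma norm_minner_outer_le_op_norm:
  assumes "dual_norm cj \<nu> x \<le> 1" "\<nu> y \<le> 1"
  shows "norm (minner cj C (outer cj x y)) \<le> op_norm \<nu> C"
proof -
  have "norm (minner cj C (outer cj x y)) = norm (vinner cj x (C *v y))"
    by (simp add: minner_outer norm_vinner_commute)
  also have "\<dots> \<le> \<nu> (C *v y)"
    using norm_vinner_le_dual_norm[of x "C *v y"] mult_right_mono[OF assms(1) nu_nonneg[of "C *v y"]]
    by simp
  also have "\<dots> \<le> op_norm \<nu> C"
    using assms(2) by (rule nu_matrix_vector_mult_le_op_norm)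
  finally show ?thesis .
qed

lemma inner_matrix_vector_mult_le_op_norm:
  assumes "dual_norm cj \<nu> x \<le> 1" "\<nu> y \<le> 1"
  shows "(C *v y) \<bullet> x \<le> op_norm \<nu> C"
  using order_trans[OF inner_one_le_norm norm_minner_outer_le_op_norm[OF assms, of C]]
  by (simp add: minner_outer_inner_one)

lemma op_norm_attained_inner:
  obtains x y where "dual_norm cj \<nu> x \<le> 1" "\<nu> y \<le> 1" "(C *v y) \<bullet> x = op_norm \<nu> C"
proof -
  obtain y where y: "\<nu> y \<le> 1" "op_norm \<nu> C = \<nu> (C *v y)"
    using op_norm_attained by metis
  obtain x where x: "dual_norm cj \<nu> x \<le> 1" "vinner cj (C *v y) x = of_real (op_norm \<nu> C)"
    using exists_norming_dual_vector y(2) by metis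
  then have "(C *v y) \<bullet> x = op_norm \<nu> C"
    by (metis vinner_inner_one of_real_inner_one)
  with x(1) y(1) that show ?thesis
    by blast
qed

lemma V_set_nonempty: "V_set cj \<nu> C \<noteq> {}"
proof -
  obtain x0 y0 where x0: "dual_norm cj \<nu> x0 \<le> 1" and y0: "\<nu> y0 \<le> 1"
    and max: "(C *v y0) \<bullet> x0 = op_norm \<nu> C"
    by (rule op_norm_attained_inner)
  have "linear (\<lambda>y. (C *v y) \<bullet> x0)"
    by (intro bounded_linear.linear bounded_linear_compose[OF bounded_linear_inner_left]
        matrix_vector_mul_bounded_linear)
  then have "\<exists>y1. y1 extreme_point_of unit_ball \<nu> \<and> (C *v y1) \<bullet> x0 = (C *v y0) \<bullet> x0"
    using y0 max inner_matrix_vector_mult_le_op_norm[OF x0]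
    by (intro linear_max_at_extreme_point[OF compact_unit_ball convex_unit_ball]) auto
  then obtain y1 where y1: "y1 extreme_point_of unit_ball \<nu>" "(C *v y1) \<bullet> x0 = op_norm \<nu> C"
    using max by auto
  then have "\<nu> y1 \<le> 1"
    by (auto simp: extreme_point_of_def)
  then have "\<exists>x1. x1 extreme_point_of unit_ball (dual_norm cj \<nu>) \<and> (C *v y1) \<bullet> x1 = (C *v y1) \<bullet> x0"
    using x0 y1(2) inner_matrix_vector_mult_le_op_norm
    by (intro linear_max_at_extreme_point[OF compact_dual_unit_ball convex_dual_unit_ball
        bounded_linear.linear[OF bounded_linear_inner_right]]) auto
  then obtain x1 where x1: "x1 extreme_point_of unit_ball (dual_norm cj \<nu>)" "(C *v y1) \<bullet> x1 = op_norm \<nu> C"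
    using y1(2) by auto
  then have "dual_norm cj \<nu> x1 \<le> 1"
    by (auto simp: extreme_point_of_def)
  then have "norm (minner cj C (outer cj x1 y1)) \<le> minner cj C (outer cj x1 y1) \<bullet> 1"
    using norm_minner_outer_le_op_norm[OF _ \<open>\<nu> y1 \<le> 1\<close>] x1(2) by (simp add: minner_outer_inner_one)
  then have "minner cj C (outer cj x1 y1) = of_real (op_norm \<nu> C)"
    using eq_of_real_norm_if_norm_le_inner_one x1(2) inner_one_le_norm
    by (metis minner_outer_inner_one order_antisym)
  then show ?thesis
    using x1(1) y1(1) unfolding V_set_def ext_ball_def by blast
qed

lemma norm_minner_le_op_norm_if_mem_V_set:
  assumes "M \<in> V_set cj \<nu> C"
  shows "norm (minner cj D M) \<le> op_norm \<nu> D"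
  using assms norm_minner_outer_le_op_norm
  by (auto simp: mem_V_set_iff ext_ball_def extreme_point_of_def)

lemma norm_parallel_imp_mem_V_set:
  assumes "norm_parallel \<nu> A B"
  obtains M where "M \<in> V_set cj \<nu> A" "norm (minner cj B M) = op_norm \<nu> B"
proof -
  obtain c where c: "norm c = 1"
    "op_norm \<nu> (A + (\<chi> i j. c * B $ i $ j)) = op_norm \<nu> A + op_norm \<nu> B"
    using assms unfolding norm_parallel_def by blast
  obtain M where M: "M \<in> V_set cj \<nu> (A + (\<chi> i j. c * B $ i $ j))"
    using V_set_nonempty by blast
  then have "minner cj A M + c * minner cj B M = of_real (op_norm \<nu> A + op_norm \<nu> B)"
    using c(2) by (simp add: mem_V_set_iff minner_add_scaled)
  moreover have "norm (minner cj A M) \<le> op_norm \<nu> A"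
    using M by (rule norm_minner_le_op_norm_if_mem_V_set)
  moreover have "norm (c * minner cj B M) \<le> op_norm \<nu> B"
    using norm_minner_le_op_norm_if_mem_V_set[OF M, of B] c(1) by (simp add: norm_mult)
  ultimately have A: "minner cj A M = of_real (op_norm \<nu> A)"
    and B: "c * minner cj B M = of_real (op_norm \<nu> B)"
    by (rule add_eq_of_real_imp_summands_of_real)+
  have "M \<in> V_set cj \<nu> A"
    using M A by (simp add: mem_V_set_iff)
  moreover have "norm (minner cj B M) = op_norm \<nu> B"
    using arg_cong[OF B, of norm] c(1) op_norm_nonneg[of B] by (simp add: norm_mult)
  ultimately show ?thesis
    using that by blast
qed

lemma norm_parallel_if_convex_combination:
  assumes M: "\<And>j. j < k \<Longrightarrow> M j \<in> V_set cj \<nu> A"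
    and t: "\<And>j. j < k \<Longrightarrow> 0 \<le> t j" "(\<Sum>j<k. t j) = 1"
    and B: "norm (\<Sum>j<k. of_real (t j) * minner cj B (M j)) = op_norm \<nu> B"
  shows "norm_parallel \<nu> A B"
proof -
  define s where "s = (\<Sum>j<k. of_real (t j) * minner cj B (M j))"
  obtain c where c: "norm c = 1" "c * s = of_real (op_norm \<nu> B)"
    using exists_unit_mult_eq_norm[of s] B s_def by metis
  define A' where "A' = A + (\<chi> i j. c * B $ i $ j)"
  have "(\<Sum>j<k. of_real (t j) * minner cj A' (M j)) =
      (\<Sum>j<k. of_real (t j) * (of_real (op_norm \<nu> A) + c * minner cj B (M j)))"
    using M by (intro sum.cong) (simp_all add: A'_def minner_add_scaled mem_V_set_iff)
  also have "\<dots> = of_real (\<Sum>j<k. t j) * of_real (op_norm \<nu> A) + c * s"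
    by (simp add: s_def distrib_left sum.distrib sum_distrib_left sum_distrib_right mult_ac)
  also have "\<dots> = of_real (op_norm \<nu> A + op_norm \<nu> B)"
    using t(2) c(2) by simp
  finally have "op_norm \<nu> A + op_norm \<nu> B = norm (\<Sum>j<k. of_real (t j) * minner cj A' (M j))"
    using op_norm_nonneg[of A] op_norm_nonneg[of B] by (simp del: of_real_add)
  also have "\<dots> \<le> (\<Sum>j<k. t j * op_norm \<nu> A')"
  proof (intro order_trans[OF norm_sum] sum_mono)
    fix j
    assume "j \<in> {..<k}"
    then have "norm (minner cj A' (M j)) \<le> op_norm \<nu> A'" "0 \<le> t j"
      using norm_minner_le_op_norm_if_mem_V_set[OF M[of j]] t(1)[of j] by auto
    then show "norm (of_real (t j) * minner cj A' (M j)) \<le> t j * op_norm \<nu> A'"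
      by (simp add: norm_mult mult_left_mono)
  qed
  also have "\<dots> = op_norm \<nu> A'"
    using t(2) by (simp flip: sum_distrib_right)
  finally have "op_norm \<nu> A + op_norm \<nu> B \<le> op_norm \<nu> A'" .
  moreover have "op_norm \<nu> A' \<le> op_norm \<nu> A + op_norm \<nu> B"
    using op_norm_add_scaled_le[of A c B] c(1) by (simp add: A'_def)
  ultimately show ?thesis
    unfolding norm_parallel_def A'_def using c(1) by force
qed

lemma norm_parallel_iff_convex_combination:
  fixes K :: nat
  assumes "1 \<le> K"
  shows "norm_parallel \<nu> A B \<longleftrightarrow>
    (\<exists>k\<le>K. \<exists>M t. (\<forall>j<k. M j \<in> V_set cj \<nu> A \<and> 0 < t j) \<and> (\<Sum>j<k. t j) = 1 \<and>
       norm (\<Sum>j<k. of_real (t j) * minner cj B (M j)) = op_norm \<nu> B)"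
proof
  assume "norm_parallel \<nu> A B"
  then obtain M where M: "M \<in> V_set cj \<nu> A" "norm (minner cj B M) = op_norm \<nu> B"
    by (rule norm_parallel_imp_mem_V_set)
  show "\<exists>k\<le>K. \<exists>M t. (\<forall>j<k. M j \<in> V_set cj \<nu> A \<and> 0 < t j) \<and> (\<Sum>j<k. t j) = 1 \<and>
       norm (\<Sum>j<k. of_real (t j) * minner cj B (M j)) = op_norm \<nu> B"
    using assms by (intro exI[of _ "Suc 0"] conjI exI[of _ "\<lambda>_. M"] exI[of _ "\<lambda>_. 1"]) (use M in simp_all)
next
  assume "\<exists>k\<le>K. \<exists>M t. (\<forall>j<k. M j \<in> V_set cj \<nu> A \<and> 0 < t j) \<and> (\<Sum>j<k. t j) = 1 \<and>
       norm (\<Sum>j<k. of_real (t j) * minner cj B (M j)) = op_norm \<nu> B"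
  then obtain k :: nat and M t where "\<forall>j<k. M j \<in> V_set cj \<nu> A \<and> 0 < t j" "(\<Sum>j<k. t j) = 1"
    "norm (\<Sum>j<k. of_real (t j) * minner cj B (M j)) = op_norm \<nu> B"
    by blast
  then show "norm_parallel \<nu> A B"
    by (intro norm_parallel_if_convex_combination[of k M A t B]) auto
qed

end

lemma conj_field_cnj: "conj_field cnj"
  by unfold_locales (simp_all add: inner_complex_def)

lemma conj_field_id: "conj_field (id :: real \<Rightarrow> real)"
  by unfold_locales simp_all

theorem proposition3p6:
  shows
  "(\<forall>(\<nu>::complex ^ 'n \<Rightarrow> real) (A::complex ^ 'n ^ 'n) B. is_norm_on \<nu> \<longrightarrow>
      (norm_parallel \<nu> A B \<longleftrightarrow>
        (\<exists>k::nat. k \<le> 3 \<and> (\<exists>(M::nat \<Rightarrow> complex ^ 'n ^ 'n) (t::nat \<Rightarrow> real).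
            (\<forall>j<k. M j \<in> V_set cnj \<nu> A \<and> 0 < t j) \<and> (\<Sum>j<k. t j) = 1 \<and>
            norm (\<Sum>j<k. complex_of_real (t j) * minner cnj B (M j)) = op_norm \<nu> B))))
   \<and>
   (\<forall>(\<nu>::real ^ 'n \<Rightarrow> real) (A::real ^ 'n ^ 'n) B. is_norm_on \<nu> \<longrightarrow>
      (norm_parallel \<nu> A B \<longleftrightarrow>
        (\<exists>k::nat. k \<le> 2 \<and> (\<exists>(M::nat \<Rightarrow> real ^ 'n ^ 'n) (t::nat \<Rightarrow> real).
            (\<forall>j<k. M j \<in> V_set id \<nu> A \<and> 0 < t j) \<and> (\<Sum>j<k. t j) = 1 \<and>
            norm (\<Sum>j<k. t j * minner id B (M j)) = op_norm \<nu> B))))"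
proof (intro conjI allI impI)
  fix \<nu> :: "complex ^ 'n \<Rightarrow> real" and A B
  assume "is_norm_on \<nu>"
  then have "conj_vector_norm cnj \<nu>"
    by (intro conj_vector_norm.intro conj_field_cnj vector_norm.intro)
  show "norm_parallel \<nu> A B \<longleftrightarrow> (\<exists>k::nat. k \<le> 3 \<and> (\<exists>M t.
      (\<forall>j<k. M j \<in> V_set cnj \<nu> A \<and> 0 < t j) \<and> (\<Sum>j<k. t j) = 1 \<and>
      norm (\<Sum>j<k. complex_of_real (t j) * minner cnj B (M j)) = op_norm \<nu> B))"
    by (rule conj_vector_norm.norm_parallel_iff_convex_combination[OF \<open>conj_vector_norm cnj \<nu>\<close>]) simp
next
  fix \<nu> :: "real ^ 'n \<Rightarrow> real" and A B
  assume "is_norm_on \<nu>"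
  then have "conj_vector_norm id \<nu>"
    by (intro conj_vector_norm.intro conj_field_id vector_norm.intro)
  show "norm_parallel \<nu> A B \<longleftrightarrow> (\<exists>k::nat. k \<le> 2 \<and> (\<exists>M t.
      (\<forall>j<k. M j \<in> V_set id \<nu> A \<and> 0 < t j) \<and> (\<Sum>j<k. t j) = 1 \<and>
      norm (\<Sum>j<k. t j * minner id B (M j)) = op_norm \<nu> B))"
    using conj_vector_norm.norm_parallel_iff_convex_combination[OF \<open>conj_vector_norm id \<nu>\<close>, where K = 2]
    by simp
qed

end
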